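(* For every $n \geq 1$, the map $\psi$ restricts to a bijection from $\mathcal{S}^{(2)}_n$, the set of skeletons of 2-connected planar linear normal $\lambda$-terms with $n$ atoms, onto $\mathcal{V}^+_{n-1}$, the set of v-trees with $n-1$ edges having no label equal to $0$.
   Context: $\lambda$-terms, linear (closed, each abstraction binds exactly one atom), normal (no sub-term $(\lambda x.u)\,v$) and planar terms are standard; the skeleton is the plane unary-binary tree (atom $\mapsto$ leaf, application $u\,v \mapsto$ binary node with left subtree from $u$ and right from $v$, abstraction $\mapsto$ unary node). The diagram replaces each leaf by an edge from its parent to the binding unary node, drawn counter-clockwise and entering from the right; planar means this can be done without crossings; the term is 2-connected if the diagram is 2-edge-connected. For a unary-binary tree $S$ and node $u$, $S_u$ is the subtree at $u$; $\operatorname{leaf}, \operatorname{unary}$ count leaves and unary nodes. The map $\psi$: for a skeleton $S$ of a planar linear normal term, let $T$ be the plane tree whose nodes are a new root $r$ and the binary nodes of $S$. For a node $u$ of $T$, let $R(u)$ be the right subtree of $u$ in $S$ if $u$ is binary, and $R(r)=S$. The children of $u$ in $T$, left to right, are $x_1,\ldots,x_m$ where $x_1$ is the first binary node of $R(u)$ reached from its root through a (possibly empty) chain of unary nodes, and $x_{i+1}$ is the left child of $x_i$ in $S$ as long as it is binary. Label each binary node $u$ by $\operatorname{leaf}(S_v)-\operatorname{unary}(S_v)$ with $v$ its right child, and $r$ by $\operatorname{leaf}(S_w)-\operatorname{unary}(S_w)$ with $w$ the first non-unary node of $S$. Set $\psi(S)=(T,\ell)$. A v-tree is a plane tree with integer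 node labels $\ell$ such that: (i) leaves have label $0$ or $1$; (ii) every non-root node $u$ with children $v_1,\ldots,v_k$ satisfies $0 \le \ell(u) \le 1+\sum_i \ell(v_i)$; (iii) the root $r$ with children $v_1,\ldots,v_k$ satisfies $\ell(r) = 1+\sum_i \ell(v_i)$. Size = number of edges. *)

theory Defs
  imports Main
begin

datatype lterm = Var nat | Lam nat lterm | App lterm lterm

fun occ :: "nat \<Rightarrow> lterm \<Rightarrow> nat" where
  "occ x (Var y) = (if x = y then 1 else 0)"
| "occ x (Lam y t) = (if x = y then 0 else occ x t)"
| "occ x (App t u) = occ x t + occ x u"

definition closed_term :: "lterm \<Rightarrow> bool" where
  "closed_term t \<longleftrightarrow> (\<forall>x. occ x t = 0)"

fun abs_linear :: "lterm \<Rightarrow> bool" where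
  "abs_linear (Var x) = True"
| "abs_linear (Lam x t) = (occ x t = 1 \<and> abs_linear t)"
| "abs_linear (App t u) = (abs_linear t \<and> abs_linear u)"

definition linear_term :: "lterm \<Rightarrow> bool" where
  "linear_term t \<longleftrightarrow> closed_term t \<and> abs_linear t"

fun normal_term :: "lterm \<Rightarrow> bool" where
  "normal_term (Var x) = True"
| "normal_term (Lam x t) = normal_term t"
| "normal_term (App t u) = ((\<forall>x s. t \<noteq> Lam x s) \<and> normal_term t \<and> normal_term u)"

fun atoms :: "lterm \<Rightarrow> nat" where
  "atoms (Var x) = 1"
| "atoms (Lam x t) = atoms t"
| "atoms (App t u) = atoms t + atoms u"

text \<open>Planarity, via the standard ordered (non-commutative) linear typing discipline:
  a context is an ordered list of variables; abstraction appends the bound variable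
  at the right end of the context, and an application splits its context into a
  left part (for the function) and a right part (for the argument).\<close>
inductive planar_ctx :: "nat list \<Rightarrow> lterm \<Rightarrow> bool" where
  pvar: "planar_ctx [x] (Var x)"
| plam: "x \<notin> set \<Gamma> \<Longrightarrow> planar_ctx (\<Gamma> @ [x]) t \<Longrightarrow> planar_ctx \<Gamma> (Lam x t)"
| papp: "planar_ctx \<Gamma> t \<Longrightarrow> planar_ctx \<Delta> u \<Longrightarrow> planar_ctx (\<Gamma> @ \<Delta>) (App t u)"

definition planar_term :: "lterm \<Rightarrow> bool" where
  "planar_term t \<longleftrightarrow> planar_ctx [] t"

datatype utree = LNode | UNode utree | BNode utree utree

fun skel :: "lterm \<Rightarrow> utree" where
  "skel (Var x) = LNode"
| "skel (Lam x t) = UNode (skel t)"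
| "skel (App t u) = BNode (skel t) (skel u)"

fun leaf_count :: "utree \<Rightarrow> nat" where
  "leaf_count LNode = 1"
| "leaf_count (UNode s) = leaf_count s"
| "leaf_count (BNode a b) = leaf_count a + leaf_count b"

fun unary_count :: "utree \<Rightarrow> nat" where
  "unary_count LNode = 0"
| "unary_count (UNode s) = Suc (unary_count s)"
| "unary_count (BNode a b) = unary_count a + unary_count b"

text \<open>Nodes of a term are addressed by paths (child indices from the root).
  The vertices of the diagram are the non-leaf nodes (abstractions and applications).\<close>
type_synonym path = "nat list"

fun diag_vertices :: "path \<Rightarrow> lterm \<Rightarrow> path set" where
  "diag_vertices p (Var x) = {}"
| "diag_vertices p (Lam x t) = insert p (diag_vertices (p @ [0]) t)"
| "diag_vertices p (App t u) = insert p (diag_vertices (p @ [0]) t \<union> diag_vertices (p @ [1]) u)"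

text \<open>The edge from a node at path p to its i-th child c: a tree edge if c is not a leaf,
  otherwise (c an atom x) the edge from p to the abstraction binding x
  (env maps each variable to the path of its binding abstraction).\<close>
fun child_edge :: "(nat \<Rightarrow> path) \<Rightarrow> path \<Rightarrow> nat \<Rightarrow> lterm \<Rightarrow> path \<times> path" where
  "child_edge env p i (Var x) = (p, env x)"
| "child_edge env p i c = (p, p @ [i])"

text \<open>Edge list (a multigraph: edges may repeat, loops allowed).\<close>
fun diag_edges :: "(nat \<Rightarrow> path) \<Rightarrow> path \<Rightarrow> lterm \<Rightarrow> (path \<times> path) list" where
  "diag_edges env p (Var x) = []"
| "diag_edges env p (Lam x t) =
     child_edge (env(x := p)) p 0 t # diag_edges (env(x := p)) (p @ [0]) t"
| "diag_edges env p (App t u) =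
     [child_edge env p 0 t, child_edge env p 1 u] @ diag_edges env (p @ [0]) t @ diag_edges env (p @ [1]) u"

definition diagram_vertices :: "lterm \<Rightarrow> path set" where
  "diagram_vertices t = diag_vertices [] t"

definition diagram_edges :: "lterm \<Rightarrow> (path \<times> path) list" where
  "diagram_edges t = diag_edges (\<lambda>_. []) [] t"

definition mg_connected :: "'v set \<Rightarrow> ('v \<times> 'v) list \<Rightarrow> bool" where
  "mg_connected V E \<longleftrightarrow>
     (\<forall>a\<in>V. \<forall>b\<in>V. (a, b) \<in> ({(x, y). (x, y) \<in> set E \<or> (y, x) \<in> set E})\<^sup>*)"

definition two_edge_connected :: "'v set \<Rightarrow> ('v \<times> 'v) list \<Rightarrow> bool" where
  "two_edge_connected V E \<longleftrightarrow>
     mg_connected V E \<and> (\<forall>i < length E. mg_connected V (take i E @ drop (Suc i) E))"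

definition two_connected_term :: "lterm \<Rightarrow> bool" where
  "two_connected_term t \<longleftrightarrow> two_edge_connected (diagram_vertices t) (diagram_edges t)"

definition S2 :: "nat \<Rightarrow> utree set" where
  "S2 n = {skel t | t. linear_term t \<and> normal_term t \<and> planar_term t
                       \<and> two_connected_term t \<and> atoms t = n}"

datatype 'a ptree = Node 'a "'a ptree list"

fun root_label :: "'a ptree \<Rightarrow> 'a" where
  "root_label (Node l ks) = l"

fun tree_edges :: "'a ptree \<Rightarrow> nat" where
  "tree_edges (Node l ks) = length ks + sum_list (map tree_edges ks)"

fun labels :: "'a ptree \<Rightarrow> 'a set" where
  "labels (Node l ks) = insert l (\<Union>k\<in>set ks. labels k)"

text \<open>Conditions (i) and (ii) for a non-root node and all its descendants.\<close>
fun vt_nonroot :: "int ptree \<Rightarrow> bool" where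
  "vt_nonroot (Node l ks) =
     ((ks = [] \<longrightarrow> l = 0 \<or> l = 1) \<and> 0 \<le> l \<and> l \<le> 1 + sum_list (map root_label ks)
      \<and> (\<forall>k\<in>set ks. vt_nonroot k))"

fun is_vtree :: "int ptree \<Rightarrow> bool" where
  "is_vtree (Node l ks) =
     ((ks = [] \<longrightarrow> l = 0 \<or> l = 1) \<and> l = 1 + sum_list (map root_label ks)
      \<and> (\<forall>k\<in>set ks. vt_nonroot k))"

definition Vplus :: "nat \<Rightarrow> int ptree set" where
  "Vplus m = {T. is_vtree T \<and> tree_edges T = m \<and> 0 \<notin> labels T}"

definition lab :: "utree \<Rightarrow> int" where
  "lab s = int (leaf_count s) - int (unary_count s)"

fun first_nonunary :: "utree \<Rightarrow> utree" where
  "first_nonunary (UNode s) = first_nonunary s"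
| "first_nonunary s = s"

text \<open>psi_kids s: the list of T-children of a node u with R(u) = s.\<close>
fun psi_kids :: "utree \<Rightarrow> int ptree list" where
  "psi_kids LNode = []"
| "psi_kids (UNode s) = psi_kids s"
| "psi_kids (BNode a b) =
     Node (lab b) (psi_kids b) # (case a of BNode _ _ \<Rightarrow> psi_kids a | _ \<Rightarrow> [])"

definition psi :: "utree \<Rightarrow> int ptree" where
  "psi S = Node (lab (first_nonunary S)) (psi_kids S)"

end

(* For a planar term in context \<Gamma>, the label lab of its skeleton is the number |\<Gamma>| of
   its free variables, so conditions on terms translate into conditions on labels.

   The diagram of a closed term is 2-edge-connected iff no proper subterm is closed.
   A closed proper subterm is joined to the rest of the diagram only by the tree edge
   above it, which is then a bridge.  Conversely, if every proper subterm has a free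
   variable, each non-root vertex v has a back edge from the subtree of v to a proper
   ancestor of v (an atom below v bound above v); following tree edges down to it and
   jumping over it avoids the tree edge above v, so no single edge disconnects a vertex
   from the root.

   Hence S2 n consists of the skeletons with n leaves and lab 0 in which every unary
   node, and both children of every binary node, have positive lab, and no left child
   is unary (normality); every such skeleton is realised by splitting the context of
   each application according to the label of its function part.  On these skeletons
   psi is inverted by phi: the node of T with label l and children ks comes from a
   left comb of the inverses of ks, topped by 1 + (sum of the labels of ks) - l unary
   nodes, which is the slack in condition (ii) of a v-tree. *)

theory Submission
  imports Defs "HOL-Library.Sublist"
begin

lemma planar_ctx_occ: "planar_ctx \<Gamma> t \<Longrightarrow> occ x t = count_list \<Gamma> x"
  by (induction rule: planar_ctx.induct) (auto simp: count_list_0_iff)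

lemma planar_ctx_closed_iff: "planar_ctx \<Gamma> t \<Longrightarrow> closed_term t \<longleftrightarrow> \<Gamma> = []"
  by (auto simp: closed_term_def planar_ctx_occ count_list_0_iff)

lemma planar_ctx_abs_linear: "planar_ctx \<Gamma> t \<Longrightarrow> abs_linear t"
proof (induction rule: planar_ctx.induct)
  case (plam x \<Gamma> t)
  then show ?case by (simp add: planar_ctx_occ[OF plam(2)] count_list_0_iff)
qed auto

lemma lab_skel: "planar_ctx \<Gamma> t \<Longrightarrow> lab (skel t) = int (length \<Gamma>)"
  by (induction rule: planar_ctx.induct) (auto simp: lab_def)

lemma leaf_count_skel: "leaf_count (skel t) = atoms t"
  by (induction t) auto

lemma not_closed_Var [simp]: "\<not> closed_term (Var x)"
  unfolding closed_term_def by (metis occ.simps(1) zero_neq_one)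

fun proper_subterms_open :: "lterm \<Rightarrow> bool" where
  "proper_subterms_open (Var x) = True"
| "proper_subterms_open (Lam x t) = (\<not> closed_term t \<and> proper_subterms_open t)"
| "proper_subterms_open (App t u) =
     (\<not> closed_term t \<and> \<not> closed_term u \<and> proper_subterms_open t \<and> proper_subterms_open u)"

fun subterm_at :: "lterm \<Rightarrow> path \<Rightarrow> lterm option" where
  "subterm_at t [] = Some t"
| "subterm_at (Var x) (i # q) = None"
| "subterm_at (Lam x t) (i # q) = (if i = 0 then subterm_at t q else None)"
| "subterm_at (App t u) (i # q) =
     (if i = 0 then subterm_at t q else if i = 1 then subterm_at u q else None)"

lemma closed_proper_subterm:
  "\<not> proper_subterms_open t \<Longrightarrow> \<exists>q s. q \<noteq> [] \<and> subterm_at t q = Some s \<and> closed_term s"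
proof (induction t)
  case (Lam x t)
  show ?case
  proof (cases "closed_term t")
    case True
    then show ?thesis by (intro exI[of _ "[0]"]) auto
  next
    case False
    with Lam obtain q s where "q \<noteq> []" "subterm_at t q = Some s" "closed_term s" by auto
    then show ?thesis by (intro exI[of _ "0 # q"]) auto
  qed
next
  case (App t u)
  consider "closed_term t" | "closed_term u"
    | "\<not> proper_subterms_open t" | "\<not> proper_subterms_open u"
    using App.prems by auto
  then show ?case
  proof cases
    case 1
    then show ?thesis by (intro exI[of _ "[0]"]) auto
  next
    case 2
    then show ?thesis by (intro exI[of _ "[1]"]) auto
  next
    case 3
    with App.IH(1) obtain q s where "q \<noteq> []" "subterm_at t q = Some s" "closed_term s" by blast
    then show ?thesis by (intro exI[of _ "0 # q"]) auto
  next
    case 4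
    with App.IH(2) obtain q s where "q \<noteq> []" "subterm_at u q = Some s" "closed_term s" by blast
    then show ?thesis by (intro exI[of _ "1 # q"]) auto
  qed
qed simp

section \<open>Two-edge-connectivity of rooted trees of paths with back edges\<close>

definition undirected :: "('v \<times> 'v) set \<Rightarrow> ('v \<times> 'v) set" where
  "undirected E = {(x, y). (x, y) \<in> E \<or> (y, x) \<in> E}"

lemma mg_connected_iff: "mg_connected V E \<longleftrightarrow> (\<forall>a\<in>V. \<forall>b\<in>V. (a, b) \<in> (undirected (set E))\<^sup>*)"
  by (simp add: mg_connected_def undirected_def)

lemma undirected_rtrancl_sym: "(a, b) \<in> (undirected E)\<^sup>* \<Longrightarrow> (b, a) \<in> (undirected E)\<^sup>*"
proof -
  have "sym (undirected E)" by (rule symI) (auto simp: undirected_def)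
  then have "sym ((undirected E)\<^sup>*)" by (rule sym_rtrancl)
  then show "(a, b) \<in> (undirected E)\<^sup>* \<Longrightarrow> (b, a) \<in> (undirected E)\<^sup>*"
    by (rule symD)
qed

lemma undirected_rtrancl_mono:
  assumes "E \<subseteq> E'" "(a, b) \<in> (undirected E)\<^sup>*"
  shows "(a, b) \<in> (undirected E')\<^sup>*"
proof -
  have "undirected E \<subseteq> undirected E'" using assms(1) by (auto simp: undirected_def)
  then show ?thesis using assms(2) rtrancl_mono by blast
qed

lemma mg_connected_via_root:
  assumes "\<And>v. v \<in> V \<Longrightarrow> (v, r) \<in> (undirected (set E))\<^sup>*"
  shows "mg_connected V E"
  unfolding mg_connected_iff
proof (intro ballI)
  fix a b assume "a \<in> V" "b \<in> V"
  with assms have "(a, r) \<in> (undirected (set E))\<^sup>*" "(r, b) \<in> (undirected (set E))\<^sup>*"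
    by (auto intro: undirected_rtrancl_sym)
  then show "(a, b) \<in> (undirected (set E))\<^sup>*" by (rule rtrancl_trans)
qed

lemma mg_connected_cut_invariant:
  assumes "mg_connected V E" "a \<in> V" "b \<in> V" and invariant: "\<And>e. e \<in> set E \<Longrightarrow> P (fst e) = P (snd e)"
  shows "P a = P b"
proof -
  have "(a, b) \<in> (undirected (set E))\<^sup>*"
    using assms(1-3) by (simp add: mg_connected_iff)
  then show ?thesis
  proof (induction rule: rtrancl_induct)
    case (step y z)
    then have "(y, z) \<in> set E \<or> (z, y) \<in> set E" by (simp add: undirected_def)
    then have "P y = P z" using invariant by fastforce
    with step.IH show ?case by simp
  qed simp
qed

lemma descendant_reachable_avoiding:
  assumes parent_edge: "\<And>z. z \<in> V \<Longrightarrow> z \<noteq> [] \<Longrightarrow> butlast z \<in> V \<and> (butlast z, z) \<in> E"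
    and short: "length (snd e) \<le> length v"
  shows "v @ d \<in> V \<Longrightarrow> (v, v @ d) \<in> (undirected (E - {e}))\<^sup>*"
proof (induction d rule: rev_induct)
  case (snoc j d)
  have "v @ d @ [j] \<in> V" using snoc.prems by simp
  from parent_edge[OF this] have "v @ d \<in> V" "(v @ d, v @ d @ [j]) \<in> E"
    by (simp_all add: butlast_append)
  moreover have "(v @ d, v @ d @ [j]) \<noteq> e" using short by auto
  ultimately have "(v, v @ d) \<in> (undirected (E - {e}))\<^sup>*"
    and "(v @ d, v @ d @ [j]) \<in> undirected (E - {e})"
    using snoc.IH by (auto simp: undirected_def)
  then show ?case by (rule rtrancl_into_rtrancl)
qed simp

lemma root_reachable_avoiding:
  assumes parent_edge: "\<And>z. z \<in> V \<Longrightarrow> z \<noteq> [] \<Longrightarrow> butlast z \<in> V \<and> (butlast z, z) \<in> E"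
    and back_edge: "\<And>z. z \<in> V \<Longrightarrow> z \<noteq> [] \<Longrightarrow>
      \<exists>w b. (w, b) \<in> E \<and> w \<in> V \<and> b \<in> V \<and> prefix z w \<and> strict_prefix b z"
  shows "v \<in> V \<Longrightarrow> (v, []) \<in> (undirected (E - {e}))\<^sup>*"
proof (induction "length v" arbitrary: v rule: less_induct)
  case less
  show ?case
  proof (cases "v = []")
    case False
    have parent: "butlast v \<in> V" "(butlast v, v) \<in> E" "length (butlast v) < length v"
      using parent_edge less.prems False by auto
    show ?thesis
    proof (cases "e = (butlast v, v)")
      case False
      then have "(v, butlast v) \<in> undirected (E - {e})" using parent by (auto simp: undirected_def)
      then show ?thesis using less.hyps[OF parent(3,1)] by (rule converse_rtrancl_into_rtrancl)
    next
      case True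
      \<comment> \<open>The tree edge above v is removed: go down to the back edge below v and jump over it.\<close>
      obtain w b where wb: "(w, b) \<in> E" "w \<in> V" "b \<in> V" "prefix v w" "strict_prefix b v"
        using back_edge less.prems \<open>v \<noteq> []\<close> by blast
      obtain d where d: "w = v @ d" using wb(4) prefixE by blast
      have "(v, w) \<in> (undirected (E - {e}))\<^sup>*"
        using descendant_reachable_avoiding[OF parent_edge] True wb(2) d by simp
      moreover have "(w, b) \<noteq> e" using True d parent(3) by (auto dest: arg_cong[of _ _ length])
      then have "(w, b) \<in> undirected (E - {e})" using wb(1) by (auto simp: undirected_def)
      moreover have "(b, []) \<in> (undirected (E - {e}))\<^sup>*"
        using less.hyps[OF prefix_length_less[OF wb(5)] wb(3)] .
      ultimately show ?thesis by (rule rtrancl_trans[OF rtrancl_into_rtrancl])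
    qed
  qed simp
qed

lemma set_remove_nth_subset: "set xs - {xs ! i} \<subseteq> set (take i xs @ drop (Suc i) xs)"
proof (cases "i < length xs")
  case True
  then show ?thesis by (subst (1) id_take_nth_drop[OF True]) auto
qed simp

lemma two_edge_connected_of_back_edges:
  fixes V :: "'a list set" and E :: "('a list \<times> 'a list) list"
  assumes parent_edge: "\<And>z. z \<in> V \<Longrightarrow> z \<noteq> [] \<Longrightarrow> butlast z \<in> V \<and> (butlast z, z) \<in> set E"
    and back_edge: "\<And>z. z \<in> V \<Longrightarrow> z \<noteq> [] \<Longrightarrow>
      \<exists>w b. (w, b) \<in> set E \<and> w \<in> V \<and> b \<in> V \<and> prefix z w \<and> strict_prefix b z"
  shows "two_edge_connected V E"
proof -
  have conn: "mg_connected V E'" if "set E - {e} \<subseteq> set E'" for e E'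
  proof (rule mg_connected_via_root)
    fix v assume "v \<in> V"
    with parent_edge back_edge have "(v, []) \<in> (undirected (set E - {e}))\<^sup>*"
      by (rule root_reachable_avoiding)
    then show "(v, []) \<in> (undirected (set E'))\<^sup>*" by (rule undirected_rtrancl_mono[OF that])
  qed
  show ?thesis
    unfolding two_edge_connected_def
  proof (intro conjI allI impI)
    show "mg_connected V E" by (rule conn) blast
    fix i show "mg_connected V (take i E @ drop (Suc i) E)" by (rule conn[OF set_remove_nth_subset])
  qed
qed

lemma child_edge_non_Var: "\<forall>x. c \<noteq> Var x \<Longrightarrow> child_edge env p i c = (p, p @ [i])"
  by (cases c) auto

lemma diag_vertices_non_Var: "v \<in> diag_vertices p t \<Longrightarrow> \<forall>x. t \<noteq> Var x"
  by (cases t) auto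

lemma root_in_diag_vertices: "\<forall>x. t \<noteq> Var x \<Longrightarrow> p \<in> diag_vertices p t"
  by (cases t) auto

lemma prefix_diag_vertices: "v \<in> diag_vertices p t \<Longrightarrow> prefix p v"
  by (induction t arbitrary: p) (auto dest!: append_prefixD)

lemma diag_edges_endpoints:
  "e \<in> set (diag_edges env p t) \<Longrightarrow>
    fst e \<in> diag_vertices p t \<and> (snd e \<in> diag_vertices p t \<or> (\<exists>x. 0 < occ x t \<and> snd e = env x))"
proof (induction t arbitrary: env p)
  case (Lam y t)
  then consider "e = child_edge (env(y := p)) p 0 t"
    | "e \<in> set (diag_edges (env(y := p)) (p @ [0]) t)"
    by auto
  then show ?case
  proof cases
    case 1
    then show ?thesis by (cases t) (auto simp: root_in_diag_vertices)
  next
    case 2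
    then show ?thesis using Lam.IH[OF 2] by (auto split: if_splits)
  qed
next
  case (App t u)
  then consider "e = child_edge env p 0 t" | "e = child_edge env p 1 u"
    | "e \<in> set (diag_edges env (p @ [0]) t)" | "e \<in> set (diag_edges env (p @ [1]) u)"
    by auto
  then show ?case
  proof cases
    case 1
    then show ?thesis by (cases t) (auto simp: root_in_diag_vertices)
  next
    case 2
    then show ?thesis by (cases u) (auto simp: root_in_diag_vertices)
  next
    case 3
    from App.IH(1)[OF this] show ?thesis by auto
  next
    case 4
    from App.IH(2)[OF this] show ?thesis by auto
  qed
qed simp

lemma diag_edges_parent_edge:
  "v \<in> diag_vertices p t \<Longrightarrow> v \<noteq> p \<Longrightarrow>
    butlast v \<in> diag_vertices p t \<and> (butlast v, v) \<in> set (diag_edges env p t)"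
proof (induction t arbitrary: env p)
  case (Lam y t)
  then have v: "v \<in> diag_vertices (p @ [0]) t" by simp
  show ?case
    using Lam.IH[OF v] diag_vertices_non_Var[OF v]
    by (cases "v = p @ [0]") (auto simp: child_edge_non_Var)
next
  case (App t u)
  then consider (left) "v \<in> diag_vertices (p @ [0]) t" | (right) "v \<in> diag_vertices (p @ [1]) u"
    by auto
  then show ?case
  proof cases
    case left
    then show ?thesis using App.IH(1)[OF left] diag_vertices_non_Var[OF left]
      by (cases "v = p @ [0]") (auto simp: child_edge_non_Var)
  next
    case right
    then show ?thesis using App.IH(2)[OF right] diag_vertices_non_Var[OF right]
      by (cases "v = p @ [1]") (auto simp: child_edge_non_Var)
  qed
qed simp

subsection \<open>Open proper subterms give back edges\<close>

definition binders_above :: "(nat \<Rightarrow> path) \<Rightarrow> path \<Rightarrow> lterm \<Rightarrow> bool" where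
  "binders_above env p t \<longleftrightarrow> (\<forall>x. 0 < occ x t \<longrightarrow> strict_prefix (env x) p)"

lemma strict_prefix_snoc: "strict_prefix p (p @ [i])"
  by (simp add: strict_prefix_def)

lemma strict_prefix_snoc_trans: "strict_prefix q p \<Longrightarrow> strict_prefix q (p @ [i])"
  by (rule prefix_order.less_trans[OF _ strict_prefix_snoc])

lemma binders_above_Lam:
  assumes "binders_above env p (Lam y t)"
  shows "binders_above (env(y := p)) (p @ [0]) t"
  unfolding binders_above_def
proof (intro allI impI)
  fix x assume "0 < occ x t"
  with assms have "x \<noteq> y \<Longrightarrow> strict_prefix (env x) p" by (simp add: binders_above_def)
  then show "strict_prefix ((env(y := p)) x) (p @ [0])"
    by (cases "x = y") (simp_all add: strict_prefix_snoc strict_prefix_snoc_trans)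
qed

lemma binders_above_App:
  assumes "binders_above env p (App t u)"
  shows "binders_above env (p @ [0]) t" "binders_above env (p @ [1]) u"
  using assms by (simp_all add: binders_above_def strict_prefix_snoc_trans)

lemma binders_above_closed: "closed_term t \<Longrightarrow> binders_above env p t"
  by (simp add: binders_above_def closed_term_def)

lemma binder_edge_below_child:
  assumes "0 < occ x c"
    and "\<forall>z. c \<noteq> Var z \<Longrightarrow>
      \<exists>w. (w, env x) \<in> set (diag_edges env (p @ [i]) c) \<and> prefix (p @ [i]) w"
  shows "\<exists>w. (w, env x) \<in> set (child_edge env p i c # diag_edges env (p @ [i]) c) \<and> prefix p w"
  using assms by (cases c) (auto split: if_splits dest: append_prefixD)

lemma diag_edges_binder_edge:
  "0 < occ x t \<Longrightarrow> \<forall>y. t \<noteq> Var y \<Longrightarrow> \<exists>w. (w, env x) \<in> set (diag_edges env p t) \<and> prefix p w"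
proof (induction t arbitrary: env p)
  case (Lam y t)
  then have "x \<noteq> y" "0 < occ x t" by (auto split: if_splits)
  with binder_edge_below_child[OF \<open>0 < occ x t\<close> Lam.IH[OF \<open>0 < occ x t\<close>], of "env(y := p)" p 0]
  show ?case by simp
next
  case (App t u)
  from App.prems consider (left) "0 < occ x t" | (right) "0 < occ x u" by auto
  then show ?case
  proof cases
    case left
    with binder_edge_below_child[of x t env p 0, OF left App.IH(1)] show ?thesis by auto
  next
    case right
    with binder_edge_below_child[of x u env p 1, OF right App.IH(2)] show ?thesis by auto
  qed
qed simp

lemma back_edge_below:
  assumes "v \<in> diag_vertices p t" "\<not> closed_term t" "binders_above env p t"
    and "v \<noteq> p \<Longrightarrow> \<exists>w b. (w, b) \<in> set (diag_edges env p t) \<and> prefix v w \<and> strict_prefix b v"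
  shows "\<exists>w b. (w, b) \<in> set (diag_edges env p t) \<and> prefix v w \<and> strict_prefix b v"
proof (cases "v = p")
  case True
  obtain x where x: "0 < occ x t" using assms(2) by (auto simp: closed_term_def)
  then have "strict_prefix (env x) p" using assms(3) by (simp add: binders_above_def)
  with diag_edges_binder_edge[OF x diag_vertices_non_Var[OF assms(1)]] True show ?thesis by blast
qed (rule assms(4))

lemma diag_edges_back_edge:
  "v \<in> diag_vertices p t \<Longrightarrow> v \<noteq> p \<Longrightarrow> proper_subterms_open t \<Longrightarrow> binders_above env p t \<Longrightarrow>
   \<exists>w b. (w, b) \<in> set (diag_edges env p t) \<and> prefix v w \<and> strict_prefix b v"
proof (induction t arbitrary: env p)
  case (Lam y t)
  have v: "v \<in> diag_vertices (p @ [0]) t" using Lam.prems(1,2) by simp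
  have above: "binders_above (env(y := p)) (p @ [0]) t"
    using Lam.prems(4) by (rule binders_above_Lam)
  have "\<exists>w b. (w, b) \<in> set (diag_edges (env(y := p)) (p @ [0]) t) \<and> prefix v w \<and> strict_prefix b v"
    using Lam.prems(3) back_edge_below[OF v _ above Lam.IH[OF v _ _ above]]
    by (simp add: fun_upd_def)
  then show ?case by auto
next
  case (App t u)
  note above = binders_above_App[OF App.prems(4)]
  from App.prems(1,2) consider
    (left) "v \<in> diag_vertices (p @ [0]) t" | (right) "v \<in> diag_vertices (p @ [1]) u"
    by auto
  then show ?case
  proof cases
    case left
    have "\<exists>w b. (w, b) \<in> set (diag_edges env (p @ [0]) t) \<and> prefix v w \<and> strict_prefix b v"
      by (rule back_edge_below[OF left _ above(1)])
        (use App.IH(1)[OF left _ _ above(1)] App.prems(3) in auto)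
    then show ?thesis by auto
  next
    case right
    have "\<exists>w b. (w, b) \<in> set (diag_edges env (p @ [1]) u) \<and> prefix v w \<and> strict_prefix b v"
      by (rule back_edge_below[OF right _ above(2)])
        (use App.IH(2)[OF right _ _ above(2)] App.prems(3) in auto)
    then show ?thesis by auto
  qed
qed simp

lemma two_connected_if_proper_subterms_open:
  assumes closed: "closed_term t" and "proper_subterms_open t"
  shows "two_connected_term t"
proof -
  let ?V = "diag_vertices [] t" and ?E = "diag_edges (\<lambda>_. []) [] t"
  have "two_edge_connected ?V ?E"
  proof (rule two_edge_connected_of_back_edges)
    fix v assume v: "v \<in> ?V" "v \<noteq> []"
    then show "butlast v \<in> ?V \<and> (butlast v, v) \<in> set ?E" by (rule diag_edges_parent_edge)
    obtain w b where wb: "(w, b) \<in> set ?E" "prefix v w" "strict_prefix b v"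
      using diag_edges_back_edge[OF v assms(2) binders_above_closed[OF closed]] by blast
    moreover have "w \<in> ?V" "b \<in> ?V"
      using diag_edges_endpoints[OF wb(1)] closed by (auto simp: closed_term_def)
    ultimately show "\<exists>w b. (w, b) \<in> set ?E \<and> w \<in> ?V \<and> b \<in> ?V \<and> prefix v w \<and> strict_prefix b v"
      by blast
  qed
  then show ?thesis by (simp add: two_connected_term_def diagram_vertices_def diagram_edges_def)
qed

subsection \<open>Closed proper subterms give bridges\<close>

definition crosses :: "path \<Rightarrow> path \<times> path \<Rightarrow> bool" where
  "crosses v e \<longleftrightarrow> prefix v (fst e) \<noteq> prefix v (snd e)"

lemma no_crossing_outside:
  assumes "\<not> prefix v p" "\<not> prefix p v" "binders_above env p t" "e \<in> set (diag_edges env p t)"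
  shows "\<not> crosses v e"
proof -
  have outside: "\<not> prefix v z" if "z \<in> diag_vertices p t" for z
    using prefix_diag_vertices[OF that] prefix_same_cases assms(1,2) by blast
  have "\<not> prefix v (env x)" if "0 < occ x t" for x
    using assms(1,3) that prefix_order.order_trans[of v "env x" p]
    by (auto simp: binders_above_def strict_prefix_def)
  with outside diag_edges_endpoints[OF assms(4)] show ?thesis by (auto simp: crosses_def)
qed

lemma no_crossing_inside:
  assumes "prefix v p" "closed_term t" "e \<in> set (diag_edges env p t)"
  shows "\<not> crosses v e"
proof -
  have "prefix v z" if "z \<in> diag_vertices p t" for z
    using prefix_diag_vertices[OF that] assms(1) by (rule prefix_order.trans[rotated])
  with diag_edges_endpoints[OF assms(3)] assms(2) show ?thesis
    by (auto simp: crosses_def closed_term_def)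
qed

lemma crosses_child_edge: "\<forall>x. c \<noteq> Var x \<Longrightarrow> crosses (p @ [i]) (child_edge env p i c)"
  by (simp add: child_edge_non_Var crosses_def)

lemma not_crosses_child_edge:
  assumes "binders_above env (p @ [i]) c" "j \<noteq> i \<or> q \<noteq> []"
  shows "\<not> crosses (p @ j # q) (child_edge env p i c)"
proof (cases c)
  case (Var x)
  with assms(1) have "strict_prefix (env x) (p @ [i])" by (simp add: binders_above_def)
  then have "length (env x) \<le> length p" using prefix_length_less by fastforce
  with Var show ?thesis by (auto simp: crosses_def dest: prefix_length_le)
qed (use assms(2) in \<open>auto simp: crosses_def dest: prefix_length_le\<close>)

lemma crossings_child_subtree:
  assumes "binders_above env (p @ [i]) c" "subterm_at c q = Some s" "closed_term s"
    and "q \<noteq> [] \<Longrightarrow> length (filter (crosses ((p @ [i]) @ q)) (diag_edges env (p @ [i]) c)) = 1"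
  shows "length (filter (crosses (p @ i # q))
    (child_edge env p i c # diag_edges env (p @ [i]) c)) = 1"
proof (cases "q = []")
  case True
  with assms(2,3) have "closed_term c" by simp
  then have "\<forall>x. c \<noteq> Var x" by auto
  with \<open>closed_term c\<close> have "crosses (p @ [i]) (child_edge env p i c)"
    and "filter (crosses (p @ [i])) (diag_edges env (p @ [i]) c) = []"
    using crosses_child_edge no_crossing_inside[of "p @ [i]" "p @ [i]" c]
    by (auto simp: filter_empty_conv)
  with True show ?thesis by simp
next
  case False
  with not_crosses_child_edge[OF assms(1)] assms(4) show ?thesis by simp
qed

lemma crossings_sibling_subtree:
  assumes "j \<noteq> i" "binders_above env (p @ [i]) c"
  shows "filter (crosses (p @ j # q)) (child_edge env p i c # diag_edges env (p @ [i]) c) = []"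
  using assms not_crosses_child_edge[OF assms(2)]
    no_crossing_outside[of "p @ j # q" "p @ [i]" env c]
  by (auto simp: filter_empty_conv)

lemma closed_subterm_single_crossing:
  "subterm_at t q = Some s \<Longrightarrow> q \<noteq> [] \<Longrightarrow> closed_term s \<Longrightarrow> binders_above env p t \<Longrightarrow>
   length (filter (crosses (p @ q)) (diag_edges env p t)) = 1"
proof (induction t arbitrary: env p q)
  case (Lam y t)
  then obtain q' where q: "q = 0 # q'" "subterm_at t q' = Some s"
    by (cases q) (auto split: if_splits)
  have "binders_above (env(y := p)) (p @ [0]) t" using Lam.prems(4) by (rule binders_above_Lam)
  from crossings_child_subtree[OF this q(2) Lam.prems(3) Lam.IH[OF q(2) _ Lam.prems(3) this]]
  show ?case using q(1) by (simp add: fun_upd_def)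
next
  case (App t u)
  note above = binders_above_App[OF App.prems(4)]
  have split: "length (filter P (diag_edges env p (App t u))) =
      length (filter P (child_edge env p 0 t # diag_edges env (p @ [0]) t))
    + length (filter P (child_edge env p 1 u # diag_edges env (p @ [1]) u))" for P
    by simp
  from App.prems(1,2) obtain i q' where q: "q = i # q'"
    and "i = 0 \<and> subterm_at t q' = Some s \<or> i = 1 \<and> subterm_at u q' = Some s"
    by (cases q) (auto split: if_splits)
  then consider (left) "i = 0" "subterm_at t q' = Some s"
    | (right) "i = 1" "subterm_at u q' = Some s"
    by blast
  then show ?case
  proof cases
    case left
    have "length (filter (crosses (p @ 0 # q'))
        (child_edge env p 0 t # diag_edges env (p @ [0]) t)) = 1"
      using crossings_child_subtree[OF above(1) left(2) App.prems(3)]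
        App.IH(1)[OF left(2) _ App.prems(3) above(1)] by simp
    moreover have
      "filter (crosses (p @ 0 # q')) (child_edge env p 1 u # diag_edges env (p @ [1]) u) = []"
      by (rule crossings_sibling_subtree[OF _ above(2)]) simp
    ultimately show ?thesis unfolding q left(1) split by simp
  next
    case right
    have "length (filter (crosses (p @ 1 # q'))
        (child_edge env p 1 u # diag_edges env (p @ [1]) u)) = 1"
      using crossings_child_subtree[OF above(2) right(2) App.prems(3)]
        App.IH(2)[OF right(2) _ App.prems(3) above(2)] by simp
    moreover have
      "filter (crosses (p @ 1 # q')) (child_edge env p 0 t # diag_edges env (p @ [0]) t) = []"
      by (rule crossings_sibling_subtree[OF _ above(1)]) simp
    ultimately show ?thesis unfolding q right(1) split by simp
  qed
qed (auto elim: subterm_at.elims)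

lemma filter_length_one_remove_nth:
  "length (filter P xs) = 1 \<Longrightarrow> \<exists>i < length xs. \<forall>x \<in> set (take i xs @ drop (Suc i) xs). \<not> P x"
proof (induction xs)
  case (Cons a xs)
  show ?case
  proof (cases "P a")
    case True
    with Cons.prems show ?thesis by (intro exI[of _ 0]) (auto simp: filter_empty_conv)
  next
    case False
    with Cons obtain i where "i < length xs" "\<forall>x \<in> set (take i xs @ drop (Suc i) xs). \<not> P x"
      by auto
    with False show ?thesis by (intro exI[of _ "Suc i"]) auto
  qed
qed simp

lemma subterm_at_diag_vertex:
  "subterm_at t q = Some s \<Longrightarrow> \<forall>x. s \<noteq> Var x \<Longrightarrow> p @ q \<in> diag_vertices p t"
proof (induction t arbitrary: p q)
  case (Lam y t)
  then show ?case using Lam.IH[of _ "p @ [0]"] by (cases q) (auto split: if_splits)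
next
  case (App t u)
  then show ?case using App.IH(1)[of _ "p @ [0]"] App.IH(2)[of _ "p @ [1]"]
    by (cases q) (auto split: if_splits)
qed (auto elim: subterm_at.elims)

lemma proper_subterms_open_if_two_connected:
  assumes closed: "closed_term t" and "two_connected_term t"
  shows "proper_subterms_open t"
proof (rule ccontr)
  assume "\<not> proper_subterms_open t"
  then obtain q s where q: "q \<noteq> []" "subterm_at t q = Some s" "closed_term s"
    using closed_proper_subterm by blast
  let ?V = "diag_vertices [] t" and ?E = "diag_edges (\<lambda>_. []) [] t"
  \<comment> \<open>The tree edge into the closed subterm at q is a bridge.\<close>
  have "length (filter (crosses q) ?E) = 1"
    using closed_subterm_single_crossing[OF q(2,1,3), of "\<lambda>_. []" "[]"]
      binders_above_closed[OF closed]
    by simp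
  then obtain i where "i < length ?E"
    and no_crossing: "\<forall>e \<in> set (take i ?E @ drop (Suc i) ?E). \<not> crosses q e"
    using filter_length_one_remove_nth by blast
  then have "mg_connected ?V (take i ?E @ drop (Suc i) ?E)"
    using assms(2) unfolding two_connected_term_def diagram_vertices_def diagram_edges_def
    by (simp add: two_edge_connected_def)
  moreover have "[] \<in> ?V" "q \<in> ?V"
    using root_in_diag_vertices subterm_at_diag_vertex[OF q(2)] closed q(3)
    by (metis append_Nil not_closed_Var)+
  ultimately have "prefix q [] = prefix q q"
    by (rule mg_connected_cut_invariant) (use no_crossing in \<open>auto simp: crosses_def\<close>)
  with q(1) show False by simp
qed

lemma lab_simps [simp]:
  "lab LNode = 1" "lab (UNode s) = lab s - 1" "lab (BNode a b) = lab a + lab b"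
  by (auto simp: lab_def)

fun admissible :: "utree \<Rightarrow> bool" where
  "admissible LNode = True"
| "admissible (UNode s) = (1 \<le> lab s \<and> admissible s)"
| "admissible (BNode a b) =
     (1 \<le> lab a \<and> 1 \<le> lab b \<and> (\<forall>s. a \<noteq> UNode s) \<and> admissible a \<and> admissible b)"

lemma admissible_skel_iff:
  "planar_ctx \<Gamma> t \<Longrightarrow> admissible (skel t) \<longleftrightarrow> normal_term t \<and> proper_subterms_open t"
proof (induction rule: planar_ctx.induct)
  case (plam x \<Gamma> t)
  then show ?case by (simp add: lab_skel planar_ctx_closed_iff)
next
  case (papp \<Gamma> t \<Delta> u)
  have "(\<forall>s. skel t \<noteq> UNode s) \<longleftrightarrow> (\<forall>x s. t \<noteq> Lam x s)" by (cases t) auto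
  with papp show ?case
    by (auto simp: lab_skel planar_ctx_closed_iff Suc_le_eq)
qed simp

fun term_of_skel :: "nat \<Rightarrow> nat list \<Rightarrow> utree \<Rightarrow> lterm" where
  "term_of_skel d \<Gamma> LNode = Var (hd \<Gamma>)"
| "term_of_skel d \<Gamma> (UNode s) = Lam d (term_of_skel (Suc d) (\<Gamma> @ [d]) s)"
| "term_of_skel d \<Gamma> (BNode a b) =
     App (term_of_skel d (take (nat (lab a)) \<Gamma>) a) (term_of_skel d (drop (nat (lab a)) \<Gamma>) b)"

lemma term_of_skel_correct:
  "admissible s \<Longrightarrow> int (length \<Gamma>) = lab s \<Longrightarrow> \<forall>x\<in>set \<Gamma>. x < d \<Longrightarrow>
   planar_ctx \<Gamma> (term_of_skel d \<Gamma> s) \<and> skel (term_of_skel d \<Gamma> s) = s"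
proof (induction s arbitrary: d \<Gamma>)
  case LNode
  then obtain x where "\<Gamma> = [x]" by (auto simp: length_Suc_conv)
  then show ?case by (simp add: planar_ctx.pvar)
next
  case (UNode s)
  then have "d \<notin> set \<Gamma>" "\<forall>x\<in>set (\<Gamma> @ [d]). x < Suc d" by auto
  with UNode show ?case by (auto intro: planar_ctx.plam)
next
  case (BNode a b)
  let ?k = "nat (lab a)"
  have "int (length (take ?k \<Gamma>)) = lab a" "int (length (drop ?k \<Gamma>)) = lab b"
    using BNode.prems(1,2) by auto
  moreover have "\<forall>x\<in>set (take ?k \<Gamma>). x < d" "\<forall>x\<in>set (drop ?k \<Gamma>). x < d"
    using BNode.prems(3) by (auto dest: in_set_takeD in_set_dropD)
  ultimately show ?case
    using BNode planar_ctx.papp[of "take ?k \<Gamma>" _ "drop ?k \<Gamma>"] by auto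
qed

definition admissible_skels :: "nat \<Rightarrow> utree set" where
  "admissible_skels n = {S. admissible S \<and> lab S = 0 \<and> leaf_count S = n}"

lemma S2_eq_admissible_skels: "S2 n = admissible_skels n"
proof (intro equalityI subsetI)
  fix S assume "S \<in> S2 n"
  then obtain t where t: "S = skel t" "linear_term t" "normal_term t" "planar_term t"
      "two_connected_term t" "atoms t = n"
    by (auto simp: S2_def)
  have planar: "planar_ctx [] t" using t(4) by (simp add: planar_term_def)
  have "closed_term t" using t(2) by (simp add: linear_term_def)
  then have "proper_subterms_open t" using t(5) by (rule proper_subterms_open_if_two_connected)
  with planar t show "S \<in> admissible_skels n"
    by (simp add: admissible_skels_def admissible_skel_iff lab_skel leaf_count_skel)
next
  fix S assume "S \<in> admissible_skels n"
  then have S: "admissible S" "lab S = 0" "leaf_count S = n" by (auto simp: admissible_skels_def)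
  define t where "t = term_of_skel 0 [] S"
  have planar: "planar_ctx [] t" and skel: "skel t = S"
    using term_of_skel_correct[OF S(1), of "[]"] S(2) by (auto simp: t_def)
  have closed: "closed_term t" using planar by (simp add: planar_ctx_closed_iff)
  have "normal_term t" "proper_subterms_open t"
    using admissible_skel_iff[OF planar] skel S(1) by auto
  moreover have "two_connected_term t"
    using closed \<open>proper_subterms_open t\<close> by (rule two_connected_if_proper_subterms_open)
  moreover have "linear_term t"
    using closed planar_ctx_abs_linear[OF planar] by (simp add: linear_term_def)
  ultimately show "S \<in> S2 n"
    using planar skel S(3) leaf_count_skel[of t] unfolding S2_def planar_term_def by auto
qed

section \<open>Inverting psi on admissible skeletons\<close>

(* The node of T belonging to a binary node with right subtree b is psi_node b. *)
definition psi_node :: "utree \<Rightarrow> int ptree" where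
  "psi_node s = Node (lab s) (psi_kids s)"

fun left_comb :: "utree list \<Rightarrow> utree" where
  "left_comb [] = LNode"
| "left_comb (b # bs) = BNode (left_comb bs) b"

fun phi_node :: "int ptree \<Rightarrow> utree" where
  "phi_node (Node l ks) =
     (UNode ^^ nat (1 + sum_list (map root_label ks) - l)) (left_comb (map phi_node ks))"

definition phi :: "int ptree \<Rightarrow> utree" where
  "phi T = (UNode ^^ nat (root_label T)) (phi_node T)"

lemma psi_kids_BNode: "\<forall>s. a \<noteq> UNode s \<Longrightarrow> psi_kids (BNode a b) = psi_node b # psi_kids a"
  by (cases a) (auto simp: psi_node_def)

lemma funpow_UNode_simps [simp]:
  "lab ((UNode ^^ j) c) = lab c - int j"
  "leaf_count ((UNode ^^ j) c) = leaf_count c"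
  "psi_kids ((UNode ^^ j) c) = psi_kids c"
  "first_nonunary ((UNode ^^ j) c) = first_nonunary c"
  by (induction j) auto

lemma admissible_funpow_UNode: "admissible c \<Longrightarrow> int j \<le> lab c \<Longrightarrow> admissible ((UNode ^^ j) c)"
  by (induction j) auto

lemma funpow_UNode_first_nonunary: "\<exists>k. S = (UNode ^^ k) (first_nonunary S)"
proof (induction S)
  case (UNode S)
  then obtain k where "S = (UNode ^^ k) (first_nonunary S)" by blast
  then show ?case by (intro exI[of _ "Suc k"]) simp
qed (auto intro: exI[of _ 0])

lemma first_nonunary_not_UNode: "first_nonunary S \<noteq> UNode s"
  by (induction S rule: first_nonunary.induct) auto

lemma admissible_first_nonunary: "admissible S \<Longrightarrow> admissible (first_nonunary S)"
  by (induction S rule: first_nonunary.induct) auto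

lemma psi_eq_psi_node: "psi S = psi_node (first_nonunary S)"
proof -
  have "psi_kids (first_nonunary S) = psi_kids S"
    by (induction S rule: first_nonunary.induct) auto
  then show ?thesis by (simp add: psi_def psi_node_def)
qed

lemma lab_psi_kids:
  "admissible s \<Longrightarrow> \<forall>s'. s \<noteq> UNode s' \<Longrightarrow> lab s = 1 + sum_list (map root_label (psi_kids s))"
  by (induction s) (auto simp: psi_kids_BNode psi_node_def simp del: psi_kids.simps(3))

lemma lab_le_psi_kids: "admissible s \<Longrightarrow> lab s \<le> 1 + sum_list (map root_label (psi_kids s))"
  by (induction s) (auto simp: lab_psi_kids psi_kids_BNode psi_node_def simp del: psi_kids.simps(3))

lemma vt_nonroot_psi_node: "admissible s \<Longrightarrow> 1 \<le> lab s \<Longrightarrow> vt_nonroot (psi_node s)"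
proof (induction s)
  case (UNode s)
  then show ?case using lab_le_psi_kids[of s] by (auto simp: psi_node_def)
next
  case (BNode a b)
  then show ?case
    by (auto simp: psi_node_def psi_kids_BNode lab_psi_kids simp del: psi_kids.simps(3))
qed (simp add: psi_node_def)

lemma labels_psi_node: "admissible s \<Longrightarrow> 1 \<le> lab s \<Longrightarrow> 0 \<notin> labels (psi_node s)"
proof (induction s)
  case (UNode s)
  then show ?case by (auto simp: psi_node_def)
next
  case (BNode a b)
  then show ?case by (auto simp: psi_node_def psi_kids_BNode simp del: psi_kids.simps(3))
qed (simp add: psi_node_def)

lemma tree_edges_psi_node: "admissible s \<Longrightarrow> Suc (tree_edges (psi_node s)) = leaf_count s"
proof (induction s)
  case (UNode s)
  then show ?case by (simp add: psi_node_def)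
next
  case (BNode a b)
  then show ?case by (auto simp: psi_node_def psi_kids_BNode simp del: psi_kids.simps(3))
qed (simp add: psi_node_def)

lemma phi_node_psi_node: "admissible s \<Longrightarrow> phi_node (psi_node s) = s"
proof (induction s)
  case (UNode s)
  then have "1 + sum_list (map root_label (psi_kids s)) - (lab s - 1) =
      int (Suc (nat (1 + sum_list (map root_label (psi_kids s)) - lab s)))"
    using lab_le_psi_kids[of s] by simp
  with UNode show ?case by (simp add: psi_node_def del: of_nat_Suc)
next
  case (BNode a b)
  then have "left_comb (map phi_node (psi_kids a)) = a"
    using lab_psi_kids[of a] by (simp add: psi_node_def)
  with BNode show ?case
    by (simp add: psi_node_def psi_kids_BNode lab_psi_kids del: psi_kids.simps(3))
qed (simp add: psi_node_def)

lemma left_comb_not_UNode: "left_comb bs \<noteq> UNode s"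
  by (cases bs) auto

lemma left_comb_simps:
  "lab (left_comb bs) = 1 + sum_list (map lab bs)"
  "leaf_count (left_comb bs) = 1 + sum_list (map leaf_count bs)"
  "psi_kids (left_comb bs) = map psi_node bs"
  "first_nonunary (left_comb bs) = left_comb bs"
  by (induction bs) (auto simp: psi_kids_BNode left_comb_not_UNode simp del: psi_kids.simps(3))

lemma admissible_left_comb: "\<forall>b\<in>set bs. admissible b \<and> 1 \<le> lab b \<Longrightarrow> admissible (left_comb bs)"
proof (induction bs)
  case (Cons b bs)
  moreover have "0 \<le> sum_list (map lab bs)"
    using Cons.prems by (intro sum_list_nonneg) auto
  ultimately show ?case by (cases bs) (auto simp: left_comb_simps)
qed simp

lemma root_label_nonneg: "vt_nonroot T \<Longrightarrow> 0 \<le> root_label T"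
  by (cases T) simp

lemma lab_phi_node: "vt_nonroot T \<Longrightarrow> lab (phi_node T) = root_label T"
proof (induction T)
  case (Node l ks)
  then have labs: "map (lab \<circ> phi_node) ks = map root_label ks" by auto
  with Node.prems show ?case by (simp add: left_comb_simps labs)
qed

lemma admissible_phi_node: "vt_nonroot T \<Longrightarrow> 0 \<notin> labels T \<Longrightarrow> admissible (phi_node T)"
proof (induction T)
  case (Node l ks)
  have "\<forall>b\<in>set (map phi_node ks). admissible b \<and> 1 \<le> lab b"
  proof
    fix b assume "b \<in> set (map phi_node ks)"
    then obtain k where k: "k \<in> set ks" "b = phi_node k" by auto
    with Node.prems have "vt_nonroot k" "0 \<notin> labels k" by auto
    moreover have "root_label k \<in> labels k" by (cases k) simp
    ultimately have "1 \<le> root_label k"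
      using root_label_nonneg[of k] by (cases "root_label k = 0") auto
    with Node.IH k \<open>vt_nonroot k\<close> \<open>0 \<notin> labels k\<close> show "admissible b \<and> 1 \<le> lab b"
      by (simp add: lab_phi_node)
  qed
  then have "admissible (left_comb (map phi_node ks))" by (rule admissible_left_comb)
  moreover have labs: "map (lab \<circ> phi_node) ks = map root_label ks"
    using Node.prems lab_phi_node by auto
  ultimately show ?case
    using Node.prems by (auto intro!: admissible_funpow_UNode simp: left_comb_simps labs)
qed

lemma psi_node_phi_node: "vt_nonroot T \<Longrightarrow> psi_node (phi_node T) = T"
proof (induction T)
  case (Node l ks)
  then have kids: "map (psi_node \<circ> phi_node) ks = ks" by (simp add: map_idI)
  have labs: "map (lab \<circ> phi_node) ks = map root_label ks"
    using Node.prems lab_phi_node by auto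
  from Node.prems show ?case by (simp add: psi_node_def left_comb_simps kids labs)
qed

lemma leaf_count_phi_node: "leaf_count (phi_node T) = Suc (tree_edges T)"
proof (induction T)
  case (Node l ks)
  then have leaves: "map (leaf_count \<circ> phi_node) ks = map (Suc \<circ> tree_edges) ks" by auto
  moreover have "sum_list (map (Suc \<circ> tree_edges) ks) = length ks + sum_list (map tree_edges ks)"
    by (induction ks) auto
  ultimately show ?case by (simp add: left_comb_simps leaves)
qed

lemma is_vtree_Node_iff:
  "is_vtree (Node l ks) \<longleftrightarrow> vt_nonroot (Node l ks) \<and> l = 1 + sum_list (map root_label ks)"
proof -
  have "0 \<le> sum_list (map root_label ks)" if "\<forall>k\<in>set ks. vt_nonroot k"
    using that root_label_nonneg by (intro sum_list_nonneg) auto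
  then show ?thesis by auto
qed

lemma psi_phi_root:
  assumes "admissible S" "lab S = 0"
  shows "psi S \<in> Vplus (leaf_count S - 1)" and "phi (psi S) = S"
proof -
  define c where "c = first_nonunary S"
  obtain k where S: "S = (UNode ^^ k) c" using funpow_UNode_first_nonunary c_def by blast
  have c: "admissible c" "\<forall>s. c \<noteq> UNode s"
    using admissible_first_nonunary[OF assms(1)] first_nonunary_not_UNode by (auto simp: c_def)
  then have lab_c: "lab c = 1 + sum_list (map root_label (psi_kids c))" by (rule lab_psi_kids)
  have "1 \<le> lab c" using c by (cases c) auto
  have k: "lab c = int k" using assms(2) S by simp
  have psi: "psi S = psi_node c" by (simp add: psi_eq_psi_node c_def)
  have "is_vtree (psi S)"
    using vt_nonroot_psi_node[OF c(1) \<open>1 \<le> lab c\<close>] lab_c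
    by (simp add: psi psi_node_def is_vtree_Node_iff)
  moreover have "0 \<notin> labels (psi S)" using labels_psi_node[OF c(1) \<open>1 \<le> lab c\<close>] by (simp add: psi)
  moreover have "tree_edges (psi S) = leaf_count S - 1"
    unfolding psi using tree_edges_psi_node[OF c(1)] S by simp
  ultimately show "psi S \<in> Vplus (leaf_count S - 1)" by (simp add: Vplus_def)
  have "root_label (psi_node c) = lab c" by (simp add: psi_node_def)
  then have "phi (psi S) = (UNode ^^ nat (lab c)) (phi_node (psi_node c))"
    by (simp add: psi phi_def)
  also have "\<dots> = S" using phi_node_psi_node[OF c(1)] S k by simp
  finally show "phi (psi S) = S" .
qed

lemma phi_psi_root:
  assumes "T \<in> Vplus m"
  shows "phi T \<in> admissible_skels (Suc m)" and "psi (phi T) = T"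
proof -
  obtain l ks where T: "T = Node l ks" by (cases T)
  with assms have "is_vtree (Node l ks)" "0 \<notin> labels T" "tree_edges T = m"
    by (auto simp: Vplus_def)
  from this(1) have vt: "vt_nonroot T" and l: "l = 1 + sum_list (map root_label ks)"
    unfolding T is_vtree_Node_iff by auto
  have "admissible (phi_node T)" using vt \<open>0 \<notin> labels T\<close> by (rule admissible_phi_node)
  moreover have lab: "lab (phi_node T) = l" using lab_phi_node[OF vt] T by simp
  moreover have "0 \<le> l" using vt T by simp
  ultimately show "phi T \<in> admissible_skels (Suc m)"
    using leaf_count_phi_node[of T] \<open>tree_edges T = m\<close>
    by (auto simp: admissible_skels_def phi_def T intro: admissible_funpow_UNode)
  have "first_nonunary (phi_node T) = phi_node T" using l T by (simp add: left_comb_simps)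
  then show "psi (phi T) = T"
    using psi_node_phi_node[OF vt] by (simp add: phi_def psi_eq_psi_node)
qed

lemma bij_betw_psi_admissible_skels:
  assumes "1 \<le> n"
  shows "bij_betw psi (admissible_skels n) (Vplus (n - 1))"
proof (rule bij_betw_byWitness[where f' = phi])
  show "\<forall>S\<in>admissible_skels n. phi (psi S) = S" "psi ` admissible_skels n \<subseteq> Vplus (n - 1)"
    using psi_phi_root by (auto simp: admissible_skels_def)
  show "\<forall>T\<in>Vplus (n - 1). psi (phi T) = T" using phi_psi_root by blast
  show "phi ` Vplus (n - 1) \<subseteq> admissible_skels n"
    using phi_psi_root(1)[of _ "n - 1"] assms by auto
qed

theorem proposition11:
  fixes n :: nat
  assumes "n \<ge> 1"
  shows "bij_betw psi (S2 n) (Vplus (n - 1))"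
  using bij_betw_psi_admissible_skels[OF assms] by (simp add: S2_eq_admissible_skels)

end
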